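(* Let $\Omega\subset\mathbb{R}^d$ be a bounded domain with Lipschitz boundary and let $\mathcal{A}\in[L^\infty(\Omega)]^{d\times d}$ be symmetric and uniformly positive definite. Let $V=\widetilde H^1(\Omega)=\{v\in H^1(\Omega):(v,1)=0\}$, $a(u,v)=(\mathcal{A}\nabla u,\nabla v)$, $|||v|||=a(v,v)^{1/2}$, and let $C_P$ be the smallest constant such that $\|v\|_{L^2(\Omega)}\le C_P|||v|||$ for all $v\in V$. Let $u_*\in V$, $\lambda_*\in\mathbb{R}$, and let $w\in V$ satisfy $$a(w,v)=a(u_*,v)-\lambda_*(u_*,v)\quad\forall v\in V.$$ Then $$|||w|||\le\|\nabla u_*-\mathcal{A}^{-1}\mathbf{q}\|_{\mathcal{A}}+C_P\|\lambda_*u_*+\operatorname{div}\mathbf{q}\|_{L^2(\Omega)}\quad\forall\mathbf{q}\in W_0,$$ where $W_0=\{\mathbf{q}\in H(\operatorname{div},\Omega):\mathbf{q}\cdot\mathbf{n}=0\text{ on }\partial\Omega\}$.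
   Context: $(\cdot,\cdot)$ is the $L^2(\Omega)$ scalar product; $H(\operatorname{div},\Omega)$ is the space of $[L^2(\Omega)]^d$ fields with square integrable weak divergence; $\mathbf{n}$ is the unit outward normal; $\|\mathbf{q}\|_{\mathcal{A}}^2=(\mathcal{A}\mathbf{q},\mathbf{q})$. *)

theory Defs
  imports "HOL-Analysis.Analysis"
begin

definition lipschitz_domain :: "'a::euclidean_space set \<Rightarrow> bool" where
  "lipschitz_domain \<Omega> \<longleftrightarrow> open \<Omega> \<and> connected \<Omega> \<and> bounded \<Omega> \<and> \<Omega> \<noteq> {} \<and>
     (\<forall>x\<in>frontier \<Omega>. \<exists>e r L (g :: 'a \<Rightarrow> real). norm e = 1 \<and> r > 0 \<and>
        lipschitz_on L {z. z \<bullet> e = 0} g \<and>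
        \<Omega> \<inter> ball x r = {y \<in> ball x r. y \<bullet> e < g (y - (y \<bullet> e) *\<^sub>R e)})"

text \<open>Infinitely differentiable functions (greatest fixed point: differentiable everywhere
  and all directional derivatives again smooth).\<close>
coinductive smooth :: "('a::euclidean_space \<Rightarrow> real) \<Rightarrow> bool" where
  "(\<forall>x. f differentiable (at x)) \<Longrightarrow> (\<forall>b. smooth (\<lambda>x. frechet_derivative f (at x) b))
     \<Longrightarrow> smooth f"

definition cgrad :: "('a::euclidean_space \<Rightarrow> real) \<Rightarrow> 'a \<Rightarrow> 'a" where
  "cgrad \<phi> x = (\<Sum>i\<in>Basis. frechet_derivative \<phi> (at x) i *\<^sub>R i)"

definition test_fun :: "'a::euclidean_space set \<Rightarrow> ('a \<Rightarrow> real) \<Rightarrow> bool" where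
  "test_fun \<Omega> \<phi> \<longleftrightarrow> smooth \<phi> \<and> compact (closure {x. \<phi> x \<noteq> 0}) \<and>
     closure {x. \<phi> x \<noteq> 0} \<subseteq> \<Omega>"

definition L2 :: "'a::euclidean_space set \<Rightarrow> ('a \<Rightarrow> real) \<Rightarrow> bool" where
  "L2 \<Omega> f \<longleftrightarrow> set_borel_measurable lborel \<Omega> f \<and> set_integrable lborel \<Omega> (\<lambda>x. (f x)\<^sup>2)"

definition L2v :: "'a::euclidean_space set \<Rightarrow> ('a \<Rightarrow> 'a) \<Rightarrow> bool" where
  "L2v \<Omega> q \<longleftrightarrow> set_borel_measurable lborel \<Omega> q \<and> set_integrable lborel \<Omega> (\<lambda>x. (norm (q x))\<^sup>2)"

definition L2inner :: "'a::euclidean_space set \<Rightarrow> ('a \<Rightarrow> real) \<Rightarrow> ('a \<Rightarrow> real) \<Rightarrow> real" where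
  "L2inner \<Omega> f g = (LINT x:\<Omega>|lborel. f x * g x)"

definition L2norm :: "'a::euclidean_space set \<Rightarrow> ('a \<Rightarrow> real) \<Rightarrow> real" where
  "L2norm \<Omega> f = sqrt (LINT x:\<Omega>|lborel. (f x)\<^sup>2)"

definition weak_grad :: "'a::euclidean_space set \<Rightarrow> ('a \<Rightarrow> real) \<Rightarrow> ('a \<Rightarrow> 'a) \<Rightarrow> bool" where
  "weak_grad \<Omega> v g \<longleftrightarrow> (\<forall>\<phi>. test_fun \<Omega> \<phi> \<longrightarrow> (\<forall>i\<in>Basis.
      (LINT x:\<Omega>|lborel. v x * (cgrad \<phi> x \<bullet> i)) = - (LINT x:\<Omega>|lborel. (g x \<bullet> i) * \<phi> x)))"

definition H1 :: "'a::euclidean_space set \<Rightarrow> ('a \<Rightarrow> real) \<Rightarrow> ('a \<Rightarrow> 'a) \<Rightarrow> bool" where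
  "H1 \<Omega> v g \<longleftrightarrow> L2 \<Omega> v \<and> L2v \<Omega> g \<and> weak_grad \<Omega> v g"

definition inV :: "'a::euclidean_space set \<Rightarrow> ('a \<Rightarrow> real) \<Rightarrow> ('a \<Rightarrow> 'a) \<Rightarrow> bool" where
  "inV \<Omega> v g \<longleftrightarrow> H1 \<Omega> v g \<and> L2inner \<Omega> v (\<lambda>_. 1) = 0"

definition Hdiv :: "'a::euclidean_space set \<Rightarrow> ('a \<Rightarrow> 'a) \<Rightarrow> ('a \<Rightarrow> real) \<Rightarrow> bool" where
  "Hdiv \<Omega> q r \<longleftrightarrow> L2v \<Omega> q \<and> L2 \<Omega> r \<and>
     (\<forall>\<phi>. test_fun \<Omega> \<phi> \<longrightarrow>
        (LINT x:\<Omega>|lborel. q x \<bullet> cgrad \<phi> x) = - (LINT x:\<Omega>|lborel. r x * \<phi> x))"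

text \<open>W_0: q in H(div) with vanishing normal trace, the normal trace being defined (as usual)
  by duality through Green's formula: <q.n, v> = (q, grad v) + (div q, v) for v in H^1.\<close>
definition W0 :: "'a::euclidean_space set \<Rightarrow> ('a \<Rightarrow> 'a) \<Rightarrow> ('a \<Rightarrow> real) \<Rightarrow> bool" where
  "W0 \<Omega> q r \<longleftrightarrow> Hdiv \<Omega> q r \<and>
     (\<forall>v g. H1 \<Omega> v g \<longrightarrow> (LINT x:\<Omega>|lborel. q x \<bullet> g x) + (LINT x:\<Omega>|lborel. r x * v x) = 0)"

definition coeff_ok :: "'a::euclidean_space set \<Rightarrow> ('a \<Rightarrow> 'a \<Rightarrow> 'a) \<Rightarrow> bool" where
  "coeff_ok \<Omega> A \<longleftrightarrow> (\<forall>x\<in>\<Omega>. linear (A x)) \<and>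
     (\<forall>i\<in>Basis. \<forall>j\<in>Basis. set_borel_measurable lborel \<Omega> (\<lambda>x. A x i \<bullet> j)) \<and>
     (\<exists>M. \<forall>x\<in>\<Omega>. \<forall>\<xi>. norm (A x \<xi>) \<le> M * norm \<xi>) \<and>
     (\<forall>x\<in>\<Omega>. \<forall>\<xi> \<eta>. A x \<xi> \<bullet> \<eta> = \<xi> \<bullet> A x \<eta>) \<and>
     (\<exists>c>0. \<forall>x\<in>\<Omega>. \<forall>\<xi>. c * (norm \<xi>)\<^sup>2 \<le> A x \<xi> \<bullet> \<xi>)"

definition aform :: "'a::euclidean_space set \<Rightarrow> ('a \<Rightarrow> 'a \<Rightarrow> 'a) \<Rightarrow> ('a \<Rightarrow> 'a) \<Rightarrow> ('a \<Rightarrow> 'a) \<Rightarrow> real" where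
  "aform \<Omega> A g h = (LINT x:\<Omega>|lborel. A x (g x) \<bullet> h x)"

text \<open>||p||_A = (A p, p)^(1/2); for p = grad v this is the energy norm |||v|||.\<close>
definition Anorm :: "'a::euclidean_space set \<Rightarrow> ('a \<Rightarrow> 'a \<Rightarrow> 'a) \<Rightarrow> ('a \<Rightarrow> 'a) \<Rightarrow> real" where
  "Anorm \<Omega> A p = sqrt (aform \<Omega> A p p)"

end

theory Submission
  imports Defs
begin

text \<open>Testing the defining equation of w with v = w and applying Green's formula for q \<in> W0 to w
  gives the residual identity
    |||w|||^2 = (A (\<nabla>u - A^-1 q), \<nabla>w) - (\<lambda> u + div q, w).
  The Cauchy-Schwarz inequality in the A-weighted and in the plain L2 inner product, followed by
  the Poincare inequality \<parallel>w\<parallel> \<le> C_P |||w|||, bounds the right-hand side by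
  (\<parallel>\<nabla>u - A^-1 q\<parallel>_A + C_P \<parallel>\<lambda> u + div q\<parallel>) |||w|||; dividing by |||w||| gives the estimate.
  The only technical point is the measurability of x \<mapsto> A(x)^-1 q(x): it is the pointwise limit of
  the Richardson iteration z' = z + (q - A z)/M, which contracts because A(x) is symmetric with
  spectrum in [c, M].\<close>

lemma le_sqrt_mult_if_quadratic_nonneg:
  fixes a b c :: real
  assumes quadratic_nonneg: "\<And>t. 0 \<le> a - 2*t*b + t\<^sup>2*c" and "0 \<le> c"
  shows "b \<le> sqrt a * sqrt c"
proof -
  have "0 \<le> a" using quadratic_nonneg[of 0] by simp
  consider "b \<le> 0" | "0 < b" "c = 0" | "0 < b" "0 < c"
    using \<open>0 \<le> c\<close> by linarith
  then show ?thesis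
  proof cases
    case 1
    then show ?thesis using \<open>0 \<le> a\<close> \<open>0 \<le> c\<close> by (meson order_trans mult_nonneg_nonneg real_sqrt_ge_zero)
  next
    case 2
    then show ?thesis using quadratic_nonneg[of "(a + 1) / (2*b)"] by simp
  next
    case 3
    have "0 \<le> a - 2*(b/c)*b + (b/c)\<^sup>2*c" by (rule quadratic_nonneg)
    also have "\<dots> = a - b\<^sup>2/c" using 3 by (simp add: power2_eq_square field_simps)
    finally have "b\<^sup>2 \<le> a*c" using 3 by (simp add: field_simps)
    then show ?thesis by (simp add: real_le_rsqrt flip: real_sqrt_mult)
  qed
qed

subsection \<open>Symmetric positive definite operators\<close>

lemma psd_form_cauchy_schwarz:
  fixes B :: "'a::euclidean_space \<Rightarrow> 'a"
  assumes "linear B" and sym: "\<And>x y. B x \<bullet> y = x \<bullet> B y" and psd: "\<And>x. 0 \<le> B x \<bullet> x"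
  shows "B e \<bullet> w \<le> sqrt (B e \<bullet> e) * sqrt (B w \<bullet> w)"
proof (rule le_sqrt_mult_if_quadratic_nonneg)
  fix t :: real
  have "B (e - t *\<^sub>R w) \<bullet> (e - t *\<^sub>R w) = B e \<bullet> e - 2*t*(B e \<bullet> w) + t\<^sup>2 * (B w \<bullet> w)"
    using sym[of e w] \<open>linear B\<close>
    by (simp add: linear_diff linear_scale inner_diff_left inner_diff_right power2_eq_square
        algebra_simps inner_commute)
  then show "0 \<le> B e \<bullet> e - 2*t*(B e \<bullet> w) + t\<^sup>2 * (B w \<bullet> w)" using psd[of "e - t *\<^sub>R w"] by simp
qed (rule psd)

lemma norm_power2_le_bound_mult_form:
  fixes B :: "'a::euclidean_space \<Rightarrow> 'a"
  assumes lin: "linear B" and sym: "\<And>x y. B x \<bullet> y = x \<bullet> B y"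
    and psd: "\<And>x. 0 \<le> B x \<bullet> x" and bound: "\<And>x. norm (B x) \<le> M * norm x" and "0 \<le> M"
  shows "(norm (B e))\<^sup>2 \<le> M * (B e \<bullet> e)"
proof (cases "B e = 0")
  case True
  then show ?thesis using psd[of e] \<open>0 \<le> M\<close> by simp
next
  case False
  have "B (B e) \<bullet> B e \<le> norm (B (B e)) * norm (B e)" by (rule norm_cauchy_schwarz)
  also have "\<dots> \<le> M * (norm (B e))\<^sup>2"
    using mult_right_mono[OF bound norm_ge_zero] by (simp add: power2_eq_square mult.assoc)
  finally have "sqrt (B (B e) \<bullet> B e) \<le> sqrt (M * (norm (B e))\<^sup>2)" by (rule real_sqrt_le_mono)
  also have "\<dots> = sqrt M * norm (B e)" by (simp add: real_sqrt_mult)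
  finally have BB: "sqrt (B (B e) \<bullet> B e) \<le> sqrt M * norm (B e)" .
  have "norm (B e) * norm (B e) = B e \<bullet> B e" by (metis dot_square_norm power2_eq_square)
  also have "\<dots> \<le> sqrt (B e \<bullet> e) * sqrt (B (B e) \<bullet> B e)" by (rule psd_form_cauchy_schwarz[OF lin sym psd])
  also have "\<dots> \<le> sqrt (B e \<bullet> e) * (sqrt M * norm (B e))" using BB by (rule mult_left_mono) (simp add: psd)
  finally have "norm (B e) * norm (B e) \<le> (sqrt (B e \<bullet> e) * sqrt M) * norm (B e)" by (simp add: mult_ac)
  then have "norm (B e) \<le> sqrt (B e \<bullet> e) * sqrt M" using False by simp
  then have "(norm (B e))\<^sup>2 \<le> (sqrt (B e \<bullet> e) * sqrt M)\<^sup>2" by (rule power_mono) simp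
  then show ?thesis using psd[of e] \<open>0 \<le> M\<close> by (simp add: power_mult_distrib mult_ac)
qed

lemma coercive_linear_inv:
  fixes B :: "'a::euclidean_space \<Rightarrow> 'a"
  assumes lin: "linear B" and "0 < c" and coercive: "\<And>x. c * (norm x)\<^sup>2 \<le> B x \<bullet> x"
  shows "B (inv B y) = y" and "norm (inv B y) \<le> norm y / c"
proof -
  have "inj B" unfolding linear_injective_0[OF lin]
  proof (intro allI impI)
    fix x assume "B x = 0"
    then have "c * (norm x)\<^sup>2 \<le> 0" using coercive[of x] by simp
    then show "x = 0" using \<open>0 < c\<close> by (simp add: mult_le_0_iff)
  qed
  then have "surj B" using linear_injective_imp_surjective lin by blast
  then show B_inv: "B (inv B y) = y" by (rule surj_f_inv_f)
  let ?z = "inv B y"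
  have "c * (norm ?z)\<^sup>2 \<le> y \<bullet> ?z" using coercive[of ?z] B_inv by simp
  also have "\<dots> \<le> norm y * norm ?z" by (rule norm_cauchy_schwarz)
  finally have "c * norm ?z \<le> norm y"
    by (cases "?z = 0") (use \<open>0 < c\<close> in \<open>auto simp: power2_eq_square\<close>)
  then show "norm ?z \<le> norm y / c" using \<open>0 < c\<close> by (simp add: field_simps)
qed

lemma richardson_step_contraction:
  fixes B :: "'a::euclidean_space \<Rightarrow> 'a"
  assumes lin: "linear B" and sym: "\<And>x y. B x \<bullet> y = x \<bullet> B y"
    and "0 < c" and coercive: "\<And>x. c * (norm x)\<^sup>2 \<le> B x \<bullet> x"
    and bound: "\<And>x. norm (B x) \<le> M * norm x" and "0 < M"
  shows "(norm (e - (1/M) *\<^sub>R B e))\<^sup>2 \<le> (1 - c/M) * (norm e)\<^sup>2"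
proof -
  have psd: "0 \<le> B x \<bullet> x" for x
    using coercive[of x] \<open>0 < c\<close> by (meson mult_nonneg_nonneg order_trans less_imp_le zero_le_power2)
  have expand: "(e - t *\<^sub>R b) \<bullet> (e - t *\<^sub>R b) = e \<bullet> e - 2*t*(b \<bullet> e) + t\<^sup>2*(b \<bullet> b)" for t and b :: 'a
    by (simp add: inner_diff_left inner_diff_right inner_commute power2_eq_square algebra_simps)
  have "(norm (e - (1/M) *\<^sub>R B e))\<^sup>2 = (norm e)\<^sup>2 - 2*(1/M)*(B e \<bullet> e) + (1/M)\<^sup>2 * (norm (B e))\<^sup>2"
    unfolding power2_norm_eq_inner expand ..
  also have "\<dots> \<le> (norm e)\<^sup>2 - 2*(1/M)*(B e \<bullet> e) + (1/M)\<^sup>2 * (M * (B e \<bullet> e))"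
    using norm_power2_le_bound_mult_form[OF lin sym psd bound] \<open>0 < M\<close>
    by (intro add_left_mono mult_left_mono) auto
  also have "\<dots> = (norm e)\<^sup>2 - (B e \<bullet> e)/M" using \<open>0 < M\<close> by (simp add: power2_eq_square field_simps)
  also have "\<dots> \<le> (norm e)\<^sup>2 - c*(norm e)\<^sup>2/M" using coercive[of e] \<open>0 < M\<close> by (simp add: divide_right_mono)
  also have "\<dots> = (1 - c/M) * (norm e)\<^sup>2" by (simp add: algebra_simps)
  finally show ?thesis .
qed

lemma richardson_iteration_tendsto:
  fixes B :: "'a::euclidean_space \<Rightarrow> 'a" and z :: "nat \<Rightarrow> 'a"
  assumes lin: "linear B" and sym: "\<And>x y. B x \<bullet> y = x \<bullet> B y"
    and "0 < c" and coercive: "\<And>x. c * (norm x)\<^sup>2 \<le> B x \<bullet> x"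
    and bound: "\<And>x. norm (B x) \<le> M * norm x" and "0 < M"
    and z_0: "z 0 = 0" and z_Suc: "\<And>n. z (Suc n) = z n + (1/M) *\<^sub>R (y - B (z n))"
  shows "z \<longlonglongrightarrow> inv B y"
proof -
  let ?s = "inv B y"
  define \<rho> where "\<rho> = 1 - c/M"
  obtain i :: 'a where i: "i \<in> Basis" using nonempty_Basis by blast
  have "c * (norm i)\<^sup>2 \<le> B i \<bullet> i" by (rule coercive)
  also have "\<dots> \<le> norm (B i) * norm i" by (rule norm_cauchy_schwarz)
  also have "\<dots> \<le> M * norm i * norm i" by (rule mult_right_mono[OF bound]) simp
  finally have "c \<le> M" using i by (simp add: power2_eq_square)
  then have "0 \<le> \<rho>" "\<rho> < 1" using \<open>0 < M\<close> \<open>0 < c\<close> by (auto simp: \<rho>_def field_simps)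
  have error_step: "z (Suc n) - ?s = (z n - ?s) - (1/M) *\<^sub>R B (z n - ?s)" for n
    using coercive_linear_inv(1)[OF lin \<open>0 < c\<close> coercive]
    by (simp add: z_Suc linear_diff[OF lin] algebra_simps)
  have error_bound: "(norm (z n - ?s))\<^sup>2 \<le> \<rho>^n * (norm ?s)\<^sup>2" for n
  proof (induction n)
    case (Suc n)
    have "(norm (z (Suc n) - ?s))\<^sup>2 \<le> \<rho> * (norm (z n - ?s))\<^sup>2"
      unfolding error_step \<rho>_def
      by (rule richardson_step_contraction[OF lin sym \<open>0 < c\<close> coercive bound \<open>0 < M\<close>])
    also have "\<dots> \<le> \<rho> * (\<rho>^n * (norm ?s)\<^sup>2)" using Suc \<open>0 \<le> \<rho>\<close> by (rule mult_left_mono)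
    finally show ?case by (simp add: mult_ac)
  qed (simp add: z_0)
  have "(\<lambda>n. \<rho>^n * (norm ?s)\<^sup>2) \<longlonglongrightarrow> 0"
    using \<open>0 \<le> \<rho>\<close> \<open>\<rho> < 1\<close> by (intro tendsto_mult_left_zero LIMSEQ_power_zero) simp
  with tendsto_const have "(\<lambda>n. (norm (z n - ?s))\<^sup>2) \<longlonglongrightarrow> 0"
    by (rule tendsto_sandwich[rotated 2]) (auto simp: error_bound)
  then have "(\<lambda>n. norm (z n - ?s)) \<longlonglongrightarrow> 0" using tendsto_real_sqrt by fastforce
  then show ?thesis by (simp add: tendsto_norm_zero_iff LIM_zero_iff)
qed

subsection \<open>Measurability and square integrability on a set\<close>

lemma set_borel_measurable_inner:
  fixes f g :: "_ \<Rightarrow> 'b::euclidean_space"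
  assumes "set_borel_measurable M S f" "set_borel_measurable M S g"
  shows "set_borel_measurable M S (\<lambda>x. f x \<bullet> g x)"
proof -
  have restrict: "(\<lambda>x. indicator S x *\<^sub>R (f x \<bullet> g x)) =
      (\<lambda>x. (indicator S x *\<^sub>R f x) \<bullet> (indicator S x *\<^sub>R g x))"
    by (auto simp: indicator_def fun_eq_iff)
  have "(\<lambda>x. (indicator S x *\<^sub>R f x) \<bullet> (indicator S x *\<^sub>R g x)) \<in> borel_measurable M"
    using assms unfolding set_borel_measurable_def by (rule borel_measurable_inner)
  then show ?thesis unfolding set_borel_measurable_def restrict .
qed

lemma set_borel_measurable_add:
  fixes f g :: "_ \<Rightarrow> 'b::euclidean_space"
  assumes "set_borel_measurable M S f" "set_borel_measurable M S g"
  shows "set_borel_measurable M S (\<lambda>x. f x + g x)"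
  using assms unfolding set_borel_measurable_def by (simp add: scaleR_add_right)

lemma set_borel_measurable_scaleR:
  fixes f :: "_ \<Rightarrow> 'b::euclidean_space"
  assumes "set_borel_measurable M S f"
  shows "set_borel_measurable M S (\<lambda>x. k *\<^sub>R f x)"
proof -
  have "(\<lambda>x. k *\<^sub>R (indicator S x *\<^sub>R f x)) \<in> borel_measurable M"
    using assms unfolding set_borel_measurable_def by (rule borel_measurable_scaleR[OF borel_measurable_const])
  then show ?thesis unfolding set_borel_measurable_def by (simp add: mult.commute)
qed

lemma set_borel_measurable_diff:
  fixes f g :: "_ \<Rightarrow> 'b::euclidean_space"
  assumes "set_borel_measurable M S f" "set_borel_measurable M S g"
  shows "set_borel_measurable M S (\<lambda>x. f x - g x)"
  using assms unfolding set_borel_measurable_def by (simp add: scaleR_diff_right)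

lemma set_borel_measurable_norm_power2:
  fixes f :: "_ \<Rightarrow> 'b::euclidean_space"
  assumes "set_borel_measurable M S f"
  shows "set_borel_measurable M S (\<lambda>x. (norm (f x))\<^sup>2)"
  using set_borel_measurable_inner[OF assms assms] by (simp add: power2_norm_eq_inner)

definition square_integrable :: "'x::euclidean_space set \<Rightarrow> ('x \<Rightarrow> 'b::euclidean_space) \<Rightarrow> bool" where
  "square_integrable S f \<longleftrightarrow>
     set_borel_measurable lborel S f \<and> set_integrable lborel S (\<lambda>x. (norm (f x))\<^sup>2)"

lemma square_integrable_inner:
  fixes f g :: "_ \<Rightarrow> 'b::euclidean_space"
  assumes "square_integrable S f" "square_integrable S g"
  shows "set_integrable lborel S (\<lambda>x. f x \<bullet> g x)"
proof (rule set_integrable_bound)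
  show "set_integrable lborel S (\<lambda>x. (norm (f x))\<^sup>2 + (norm (g x))\<^sup>2)"
    using assms unfolding square_integrable_def by (rule set_integral_add(1)[OF conjunct2 conjunct2])
  show "set_borel_measurable lborel S (\<lambda>x. f x \<bullet> g x)"
    using assms unfolding square_integrable_def by (simp add: set_borel_measurable_inner)
  show "AE x in lborel. x \<in> S \<longrightarrow> norm (f x \<bullet> g x) \<le> norm ((norm (f x))\<^sup>2 + (norm (g x))\<^sup>2)"
  proof (intro AE_I2 impI)
    fix x
    have "norm (f x \<bullet> g x) \<le> norm (f x) * norm (g x)" by (simp add: Cauchy_Schwarz_ineq2)
    also have "\<dots> \<le> (norm (f x))\<^sup>2 + (norm (g x))\<^sup>2"
      using sum_squares_bound[of "norm (f x)" "norm (g x)"]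
        mult_nonneg_nonneg[OF norm_ge_zero norm_ge_zero, of "f x" "g x"] by linarith
    also have "\<dots> \<le> norm ((norm (f x))\<^sup>2 + (norm (g x))\<^sup>2)" unfolding real_norm_def by (rule abs_ge_self)
    finally show "norm (f x \<bullet> g x) \<le> norm ((norm (f x))\<^sup>2 + (norm (g x))\<^sup>2)" .
  qed
qed

lemma square_integrable_mult:
  fixes f g :: "_ \<Rightarrow> real"
  assumes "square_integrable S f" "square_integrable S g"
  shows "set_integrable lborel S (\<lambda>x. f x * g x)"
  using square_integrable_inner[OF assms] by simp

lemma square_integrable_dominated:
  fixes f :: "_ \<Rightarrow> 'b::euclidean_space" and h :: "_ \<Rightarrow> 'c::euclidean_space"
  assumes f: "square_integrable S f" and "set_borel_measurable lborel S h"
    and dominated: "\<And>x. x \<in> S \<Longrightarrow> norm (h x) \<le> K * norm (f x)"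
  shows "square_integrable S h"
  unfolding square_integrable_def
proof (rule conjI[OF _ set_integrable_bound])
  show "set_integrable lborel S (\<lambda>x. K\<^sup>2 * (norm (f x))\<^sup>2)"
    using f unfolding square_integrable_def by (intro set_integrable_mult_right) simp
  show "set_borel_measurable lborel S (\<lambda>x. (norm (h x))\<^sup>2)"
    by (rule set_borel_measurable_norm_power2) fact
  show "AE x in lborel. x \<in> S \<longrightarrow> norm ((norm (h x))\<^sup>2) \<le> norm (K\<^sup>2 * (norm (f x))\<^sup>2)"
  proof (intro AE_I2 impI)
    fix x assume "x \<in> S"
    have "(norm (h x))\<^sup>2 \<le> (K * norm (f x))\<^sup>2" by (rule power_mono[OF dominated[OF \<open>x \<in> S\<close>] norm_ge_zero])
    then show "norm ((norm (h x))\<^sup>2) \<le> norm (K\<^sup>2 * (norm (f x))\<^sup>2)" by (simp add: power_mult_distrib)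
  qed
qed fact

lemma square_integrable_add:
  fixes f g :: "_ \<Rightarrow> 'b::euclidean_space"
  assumes f: "square_integrable S f" and g: "square_integrable S g"
  shows "square_integrable S (\<lambda>x. f x + g x)"
  unfolding square_integrable_def
proof (rule conjI[OF _ set_integrable_bound])
  show measurable: "set_borel_measurable lborel S (\<lambda>x. f x + g x)"
    using f g unfolding square_integrable_def by (simp add: set_borel_measurable_add)
  show "set_integrable lborel S (\<lambda>x. 2 * (norm (f x))\<^sup>2 + 2 * (norm (g x))\<^sup>2)"
    using f g unfolding square_integrable_def
    by (intro set_integral_add(1) set_integrable_mult_right) simp_all
  show "set_borel_measurable lborel S (\<lambda>x. (norm (f x + g x))\<^sup>2)"
    using measurable by (rule set_borel_measurable_norm_power2)
  show "AE x in lborel. x \<in> S \<longrightarrow>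
      norm ((norm (f x + g x))\<^sup>2) \<le> norm (2 * (norm (f x))\<^sup>2 + 2 * (norm (g x))\<^sup>2)"
  proof (intro AE_I2 impI)
    fix x
    have "(norm (f x + g x))\<^sup>2 \<le> (norm (f x) + norm (g x))\<^sup>2"
      by (rule power_mono[OF norm_triangle_ineq]) simp
    also have "\<dots> \<le> 2 * (norm (f x))\<^sup>2 + 2 * (norm (g x))\<^sup>2"
      using sum_squares_bound[of "norm (f x)" "norm (g x)"] by (simp add: power2_sum)
    finally show "norm ((norm (f x + g x))\<^sup>2) \<le> norm (2 * (norm (f x))\<^sup>2 + 2 * (norm (g x))\<^sup>2)"
      by simp
  qed
qed

lemma square_integrable_scaleR:
  fixes f :: "_ \<Rightarrow> 'b::euclidean_space"
  assumes f: "square_integrable S f"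
  shows "square_integrable S (\<lambda>x. k *\<^sub>R f x)"
proof (rule square_integrable_dominated[OF f])
  show "set_borel_measurable lborel S (\<lambda>x. k *\<^sub>R f x)"
    using f by (simp add: square_integrable_def set_borel_measurable_scaleR)
  show "norm (k *\<^sub>R f x) \<le> \<bar>k\<bar> * norm (f x)" for x by simp
qed

lemma square_integrable_diff:
  fixes f g :: "_ \<Rightarrow> 'b::euclidean_space"
  assumes "square_integrable S f" "square_integrable S g"
  shows "square_integrable S (\<lambda>x. f x - g x)"
  using square_integrable_add[OF assms(1) square_integrable_scaleR[OF assms(2), of "-1"]] by simp

lemma set_integral_cong_on:
  fixes f g :: "_ \<Rightarrow> 'b::{banach, second_countable_topology}"
  assumes "\<And>x. x \<in> S \<Longrightarrow> f x = g x"
  shows "(LINT x:S|M. f x) = (LINT x:S|M. g x)"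
  unfolding set_lebesgue_integral_def
  by (rule Bochner_Integration.integral_cong) (auto simp: indicator_def assms)

lemma set_integral_nonneg_on:
  fixes f :: "_ \<Rightarrow> real"
  assumes "\<And>x. x \<in> S \<Longrightarrow> 0 \<le> f x"
  shows "0 \<le> (LINT x:S|M. f x)"
  unfolding set_lebesgue_integral_def
  by (rule Bochner_Integration.integral_nonneg) (auto simp: indicator_def assms)

lemma coeff_ok_bounded:
  assumes "coeff_ok \<Omega> A"
  obtains M where "0 < M" "\<And>x \<xi>. x \<in> \<Omega> \<Longrightarrow> norm (A x \<xi>) \<le> M * norm \<xi>"
proof -
  obtain M where M: "\<forall>x\<in>\<Omega>. \<forall>\<xi>. norm (A x \<xi>) \<le> M * norm \<xi>"
    using assms unfolding coeff_ok_def by blast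
  show ?thesis
  proof (rule that[of "max M 1"])
    show "norm (A x \<xi>) \<le> max M 1 * norm \<xi>" if "x \<in> \<Omega>" for x \<xi>
      using M that by (meson max.cobounded1 mult_right_mono norm_ge_zero order_trans)
  qed simp
qed

lemma coeff_ok_coercive:
  assumes "coeff_ok \<Omega> A"
  obtains c where "0 < c" "\<And>x \<xi>. x \<in> \<Omega> \<Longrightarrow> c * (norm \<xi>)\<^sup>2 \<le> A x \<xi> \<bullet> \<xi>"
proof -
  from assms obtain c where "c > 0" "\<forall>x\<in>\<Omega>. \<forall>\<xi>. c * (norm \<xi>)\<^sup>2 \<le> A x \<xi> \<bullet> \<xi>"
    unfolding coeff_ok_def by blast
  then show ?thesis using that by blast
qed

lemma coeff_ok_form_nonneg:
  assumes "coeff_ok \<Omega> A" "x \<in> \<Omega>"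
  shows "0 \<le> A x \<xi> \<bullet> \<xi>"
proof -
  obtain c where "0 < c" "c * (norm \<xi>)\<^sup>2 \<le> A x \<xi> \<bullet> \<xi>"
    using coeff_ok_coercive[OF assms(1)] assms(2) by blast
  then show ?thesis by (meson mult_nonneg_nonneg order_trans less_imp_le zero_le_power2)
qed

lemma set_borel_measurable_coeff_apply:
  fixes A :: "'a::euclidean_space \<Rightarrow> 'a \<Rightarrow> 'a"
  assumes coeff: "coeff_ok \<Omega> A" and g: "set_borel_measurable lborel \<Omega> g"
  shows "set_borel_measurable lborel \<Omega> (\<lambda>x. A x (g x))"
proof -
  have entries: "\<And>i j. i \<in> Basis \<Longrightarrow> j \<in> Basis \<Longrightarrow>
      (\<lambda>x. indicator \<Omega> x *\<^sub>R (A x i \<bullet> j)) \<in> borel_measurable lborel"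
    using coeff by (auto simp: coeff_ok_def set_borel_measurable_def)
  have g': "(\<lambda>x. indicator \<Omega> x *\<^sub>R g x) \<in> borel_measurable lborel"
    using g by (simp add: set_borel_measurable_def)
  have restrict: "(\<lambda>x. indicator \<Omega> x *\<^sub>R A x (g x)) = (\<lambda>x. \<Sum>j\<in>Basis.
      (\<Sum>i\<in>Basis. ((indicator \<Omega> x *\<^sub>R g x) \<bullet> i) * (indicator \<Omega> x *\<^sub>R (A x i \<bullet> j))) *\<^sub>R j)"
  proof
    fix x
    have "A x (g x) = (\<Sum>j\<in>Basis. (\<Sum>i\<in>Basis. (g x \<bullet> i) * (A x i \<bullet> j)) *\<^sub>R j)" if "x \<in> \<Omega>"
    proof -
      have "linear (A x)" using coeff that by (simp add: coeff_ok_def)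
      then show ?thesis
        by (subst euclidean_representation[symmetric, of "A x (g x)"])
          (simp add: Linear_Algebra.linear_componentwise)
    qed
    then show "indicator \<Omega> x *\<^sub>R A x (g x) = (\<Sum>j\<in>Basis.
        (\<Sum>i\<in>Basis. ((indicator \<Omega> x *\<^sub>R g x) \<bullet> i) * (indicator \<Omega> x *\<^sub>R (A x i \<bullet> j))) *\<^sub>R j)"
      by (cases "x \<in> \<Omega>") simp_all
  qed
  have "(\<lambda>x. \<Sum>j\<in>Basis. (\<Sum>i\<in>Basis. ((indicator \<Omega> x *\<^sub>R g x) \<bullet> i) *
      (indicator \<Omega> x *\<^sub>R (A x i \<bullet> j))) *\<^sub>R j) \<in> borel_measurable lborel"
    by (intro borel_measurable_sum borel_measurable_scaleR borel_measurable_times borel_measurable_inner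
        borel_measurable_const g' entries) auto
  then show ?thesis unfolding set_borel_measurable_def restrict .
qed

lemma set_borel_measurable_coeff_inv_apply:
  fixes A :: "'a::euclidean_space \<Rightarrow> 'a \<Rightarrow> 'a"
  assumes coeff: "coeff_ok \<Omega> A" and y: "set_borel_measurable lborel \<Omega> y"
  shows "set_borel_measurable lborel \<Omega> (\<lambda>x. inv (A x) (y x))"
proof -
  obtain M where "0 < M" and bound: "\<And>x \<xi>. x \<in> \<Omega> \<Longrightarrow> norm (A x \<xi>) \<le> M * norm \<xi>"
    using coeff_ok_bounded[OF coeff] by blast
  obtain c where "0 < c" and coercive: "\<And>x \<xi>. x \<in> \<Omega> \<Longrightarrow> c * (norm \<xi>)\<^sup>2 \<le> A x \<xi> \<bullet> \<xi>"
    using coeff_ok_coercive[OF coeff] by blast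
  have lin: "\<And>x. x \<in> \<Omega> \<Longrightarrow> linear (A x)"
    and sym: "\<And>x \<xi> \<eta>. x \<in> \<Omega> \<Longrightarrow> A x \<xi> \<bullet> \<eta> = \<xi> \<bullet> A x \<eta>"
    using coeff by (simp_all add: coeff_ok_def)
  \<comment> \<open>Iterating with the restriction of \<open>y\<close> to \<open>\<Omega>\<close> keeps every iterate set-measurable.\<close>
  define Y where "Y x = indicator \<Omega> x *\<^sub>R y x" for x
  define z :: "nat \<Rightarrow> 'a \<Rightarrow> 'a"
    where "z = rec_nat (\<lambda>x. 0) (\<lambda>n z\<^sub>n x. z\<^sub>n x + (1/M) *\<^sub>R (Y x - A x (z\<^sub>n x)))"
  have z_0: "z 0 = (\<lambda>x. 0)" and z_Suc: "z (Suc n) = (\<lambda>x. z n x + (1/M) *\<^sub>R (Y x - A x (z n x)))" for n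
    by (simp_all add: z_def)
  have "(\<lambda>x. indicator \<Omega> x *\<^sub>R Y x) = (\<lambda>x. indicator \<Omega> x *\<^sub>R y x)"
    by (auto simp: Y_def indicator_def fun_eq_iff)
  then have Y: "set_borel_measurable lborel \<Omega> Y"
    using y by (simp add: set_borel_measurable_def)
  have measurable: "set_borel_measurable lborel \<Omega> (z n)" for n
  proof (induction n)
    case 0
    show ?case by (simp add: z_0 set_borel_measurable_def)
  next
    case (Suc n)
    have "set_borel_measurable lborel \<Omega> (\<lambda>x. A x (z n x))"
      using Suc by (rule set_borel_measurable_coeff_apply[OF coeff])
    then show ?case unfolding z_Suc
      by (intro set_borel_measurable_add[OF Suc] set_borel_measurable_scaleR set_borel_measurable_diff[OF Y])
  qed
  have "(\<lambda>n. indicator \<Omega> x *\<^sub>R z n x) \<longlonglongrightarrow> indicator \<Omega> x *\<^sub>R inv (A x) (y x)" for x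
  proof (cases "x \<in> \<Omega>")
    case True
    have "(\<lambda>n. z n x) \<longlonglongrightarrow> inv (A x) (y x)"
    proof (rule richardson_iteration_tendsto[where B="A x" and c=c and M=M])
      show "A x \<xi> \<bullet> \<eta> = \<xi> \<bullet> A x \<eta>" for \<xi> \<eta> using sym True .
      show "z (Suc n) x = z n x + (1/M) *\<^sub>R (y x - A x (z n x))" for n
        by (simp add: z_Suc Y_def True)
    qed (use \<open>0 < c\<close> \<open>0 < M\<close> lin coercive bound True z_0 in auto)
    then show ?thesis using True by simp
  qed simp
  then have "(\<lambda>x. indicator \<Omega> x *\<^sub>R inv (A x) (y x)) \<in> borel_measurable lborel"
    by (rule borel_measurable_LIMSEQ_metric[rotated])
      (use measurable in \<open>simp add: set_borel_measurable_def\<close>)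
  then show ?thesis by (simp add: set_borel_measurable_def)
qed

lemma square_integrable_coeff_apply:
  assumes coeff: "coeff_ok \<Omega> A" and g: "square_integrable \<Omega> g"
  shows "square_integrable \<Omega> (\<lambda>x. A x (g x))"
proof -
  obtain M where bound: "\<And>x \<xi>. x \<in> \<Omega> \<Longrightarrow> norm (A x \<xi>) \<le> M * norm \<xi>"
    using coeff_ok_bounded[OF coeff] by blast
  show ?thesis
  proof (rule square_integrable_dominated[OF g])
    show "set_borel_measurable lborel \<Omega> (\<lambda>x. A x (g x))"
      using g unfolding square_integrable_def by (intro set_borel_measurable_coeff_apply[OF coeff]) simp
  qed (rule bound)
qed

lemma square_integrable_coeff_inv_apply:
  assumes coeff: "coeff_ok \<Omega> A" and g: "square_integrable \<Omega> g"
  shows "square_integrable \<Omega> (\<lambda>x. inv (A x) (g x))"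
proof -
  obtain c where "0 < c" and coercive: "\<And>x \<xi>. x \<in> \<Omega> \<Longrightarrow> c * (norm \<xi>)\<^sup>2 \<le> A x \<xi> \<bullet> \<xi>"
    using coeff_ok_coercive[OF coeff] by blast
  have lin: "\<And>x. x \<in> \<Omega> \<Longrightarrow> linear (A x)"
    using coeff by (simp add: coeff_ok_def)
  show ?thesis
  proof (rule square_integrable_dominated[OF g, where K="1/c"])
    show "set_borel_measurable lborel \<Omega> (\<lambda>x. inv (A x) (g x))"
      using g unfolding square_integrable_def by (intro set_borel_measurable_coeff_inv_apply[OF coeff]) simp
    show "norm (inv (A x) (g x)) \<le> 1/c * norm (g x)" if "x \<in> \<Omega>" for x
      using coercive_linear_inv(2)[OF lin[OF that] \<open>0 < c\<close> coercive[OF that]] by simp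
  qed
qed

subsection \<open>Cauchy-Schwarz inequalities for weighted integrals\<close>

lemma set_integral_form_cauchy_schwarz:
  fixes B :: "'x::euclidean_space \<Rightarrow> 'b::euclidean_space \<Rightarrow> 'b"
  assumes lin: "\<And>x. x \<in> S \<Longrightarrow> linear (B x)"
    and sym: "\<And>x u v. x \<in> S \<Longrightarrow> B x u \<bullet> v = u \<bullet> B x v"
    and psd: "\<And>x u. x \<in> S \<Longrightarrow> 0 \<le> B x u \<bullet> u"
    and ff: "set_integrable lborel S (\<lambda>x. B x (f x) \<bullet> f x)"
    and fg: "set_integrable lborel S (\<lambda>x. B x (f x) \<bullet> g x)"
    and gg: "set_integrable lborel S (\<lambda>x. B x (g x) \<bullet> g x)"
  shows "(LINT x:S|lborel. B x (f x) \<bullet> g x) \<le>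
     sqrt (LINT x:S|lborel. B x (f x) \<bullet> f x) * sqrt (LINT x:S|lborel. B x (g x) \<bullet> g x)"
proof (rule le_sqrt_mult_if_quadratic_nonneg)
  fix t :: real
  have pointwise: "B x (f x - t *\<^sub>R g x) \<bullet> (f x - t *\<^sub>R g x) =
     B x (f x) \<bullet> f x - 2*t*(B x (f x) \<bullet> g x) + t\<^sup>2 * (B x (g x) \<bullet> g x)" if "x \<in> S" for x
    using sym[OF that, of "f x" "g x"] lin[OF that]
    by (simp add: linear_diff linear_scale inner_diff_left inner_diff_right power2_eq_square
        algebra_simps inner_commute)
  have "0 \<le> (LINT x:S|lborel. B x (f x - t *\<^sub>R g x) \<bullet> (f x - t *\<^sub>R g x))"
    by (rule set_integral_nonneg_on) (rule psd)
  also have "\<dots> = (LINT x:S|lborel. B x (f x) \<bullet> f x - (2*t) * (B x (f x) \<bullet> g x) + t\<^sup>2 * (B x (g x) \<bullet> g x))"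
    by (rule set_integral_cong_on) (simp add: pointwise)
  also have "\<dots> = (LINT x:S|lborel. B x (f x) \<bullet> f x) - (2*t) * (LINT x:S|lborel. B x (f x) \<bullet> g x)
       + t\<^sup>2 * (LINT x:S|lborel. B x (g x) \<bullet> g x)"
    using ff fg gg by (simp add: set_integral_add set_integral_diff set_integrable_mult_right)
  finally show "0 \<le> (LINT x:S|lborel. B x (f x) \<bullet> f x) - 2*t*(LINT x:S|lborel. B x (f x) \<bullet> g x)
       + t\<^sup>2 * (LINT x:S|lborel. B x (g x) \<bullet> g x)" by simp
qed (rule set_integral_nonneg_on, rule psd)

lemma L2norm_nonneg: "0 \<le> L2norm S f"
  unfolding L2norm_def by (simp add: set_integral_nonneg_on)

lemma L2inner_abs_le_L2norm_mult:
  assumes f: "square_integrable S f" and g: "square_integrable S g"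
  shows "\<bar>L2inner S f g\<bar> \<le> L2norm S f * L2norm S g"
proof -
  have "L2inner S f' g \<le> L2norm S f' * L2norm S g" if f': "square_integrable S f'" for f'
  proof -
    have "(LINT x:S|lborel. id (f' x) \<bullet> g x) \<le>
        sqrt (LINT x:S|lborel. id (f' x) \<bullet> f' x) * sqrt (LINT x:S|lborel. id (g x) \<bullet> g x)"
      using square_integrable_mult[OF f' f'] square_integrable_mult[OF f' g] square_integrable_mult[OF g g]
      by (intro set_integral_form_cauchy_schwarz[where B="\<lambda>_. id"]) (auto simp: linear_id)
    then show ?thesis by (simp add: L2inner_def L2norm_def power2_eq_square)
  qed
  from this[OF f] this[OF square_integrable_scaleR[OF f, of "-1"]] show ?thesis
    by (simp add: L2inner_def L2norm_def set_integral_uminus[OF square_integrable_mult[OF f g]])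
qed

lemma aform_nonneg:
  assumes "coeff_ok \<Omega> A"
  shows "0 \<le> aform \<Omega> A g g"
  unfolding aform_def by (rule set_integral_nonneg_on) (rule coeff_ok_form_nonneg[OF assms])

lemma Anorm_nonneg: "coeff_ok \<Omega> A \<Longrightarrow> 0 \<le> Anorm \<Omega> A g"
  unfolding Anorm_def by (simp add: aform_nonneg)

lemma Anorm_power2: "coeff_ok \<Omega> A \<Longrightarrow> (Anorm \<Omega> A g)\<^sup>2 = aform \<Omega> A g g"
  unfolding Anorm_def by (simp add: aform_nonneg)

lemma aform_le_Anorm_mult:
  assumes coeff: "coeff_ok \<Omega> A" and g: "square_integrable \<Omega> g" and h: "square_integrable \<Omega> h"
  shows "aform \<Omega> A g h \<le> Anorm \<Omega> A g * Anorm \<Omega> A h"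
  unfolding Anorm_def aform_def
proof (rule set_integral_form_cauchy_schwarz)
  show "linear (A x)" "A x u \<bullet> v = u \<bullet> A x v" if "x \<in> \<Omega>" for x u v
    using coeff that by (simp_all add: coeff_ok_def)
  show "0 \<le> A x u \<bullet> u" if "x \<in> \<Omega>" for x u by (rule coeff_ok_form_nonneg[OF coeff that])
qed (intro square_integrable_inner square_integrable_coeff_apply[OF coeff] g h)+

lemma square_integrable_if_inV:
  assumes "inV \<Omega> v g"
  shows "square_integrable \<Omega> v" "square_integrable \<Omega> g"
  using assms by (simp_all add: inV_def H1_def L2_def L2v_def square_integrable_def)

lemma square_integrable_if_W0:
  assumes "W0 \<Omega> q r"
  shows "square_integrable \<Omega> q" "square_integrable \<Omega> r"
  using assms by (simp_all add: W0_def Hdiv_def L2_def L2v_def square_integrable_def)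

lemma residual_energy_identity:
  assumes coeff: "coeff_ok \<Omega> A" and u: "square_integrable \<Omega> u" and gu: "square_integrable \<Omega> gu"
    and w: "H1 \<Omega> w gw" and W: "W0 \<Omega> q r"
    and eq: "aform \<Omega> A gw gw = aform \<Omega> A gu gw - lam * L2inner \<Omega> u w"
  shows "aform \<Omega> A gw gw =
    aform \<Omega> A (\<lambda>x. gu x - inv (A x) (q x)) gw - L2inner \<Omega> (\<lambda>x. lam * u x + r x) w"
proof -
  have w2: "square_integrable \<Omega> w" "square_integrable \<Omega> gw"
    using w by (simp_all add: H1_def L2_def L2v_def square_integrable_def)
  note q = square_integrable_if_W0[OF W]
  have green: "(LINT x:\<Omega>|lborel. q x \<bullet> gw x) + (LINT x:\<Omega>|lborel. r x * w x) = 0"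
    using W w by (simp add: W0_def)
  obtain c where "0 < c" and coercive: "\<And>x \<xi>. x \<in> \<Omega> \<Longrightarrow> c * (norm \<xi>)\<^sup>2 \<le> A x \<xi> \<bullet> \<xi>"
    using coeff_ok_coercive[OF coeff] by blast
  have "A x (gu x - inv (A x) (q x)) \<bullet> gw x = A x (gu x) \<bullet> gw x - q x \<bullet> gw x" if "x \<in> \<Omega>" for x
  proof -
    have "linear (A x)" using coeff that by (simp add: coeff_ok_def)
    then show ?thesis
      using coercive_linear_inv(1)[OF _ \<open>0 < c\<close> coercive[OF that]]
      by (simp add: linear_diff inner_diff_left)
  qed
  then have "aform \<Omega> A (\<lambda>x. gu x - inv (A x) (q x)) gw =
      (LINT x:\<Omega>|lborel. A x (gu x) \<bullet> gw x - q x \<bullet> gw x)"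
    unfolding aform_def by (rule set_integral_cong_on)
  also have "\<dots> = aform \<Omega> A gu gw - (LINT x:\<Omega>|lborel. q x \<bullet> gw x)"
    unfolding aform_def
    by (intro set_integral_diff(2) square_integrable_inner square_integrable_coeff_apply[OF coeff] gu w2 q)
  finally have flux: "aform \<Omega> A (\<lambda>x. gu x - inv (A x) (q x)) gw =
      aform \<Omega> A gu gw - (LINT x:\<Omega>|lborel. q x \<bullet> gw x)" .
  have "L2inner \<Omega> (\<lambda>x. lam * u x + r x) w = (LINT x:\<Omega>|lborel. lam * (u x * w x) + r x * w x)"
    unfolding L2inner_def by (simp add: algebra_simps)
  also have "\<dots> = lam * L2inner \<Omega> u w + (LINT x:\<Omega>|lborel. r x * w x)"
    unfolding L2inner_def using square_integrable_mult[OF u w2(1)] square_integrable_mult[OF q(2) w2(1)]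
    by (simp add: set_integral_add set_integrable_mult_right)
  finally show ?thesis using eq flux green by linarith
qed

lemma least_bound_constant_nonneg:
  fixes F G :: "'v \<Rightarrow> 'g \<Rightarrow> real"
  assumes bound: "\<forall>v g. P v g \<longrightarrow> F v g \<le> C * G v g"
    and least: "\<forall>C'. (\<forall>v g. P v g \<longrightarrow> F v g \<le> C' * G v g) \<longrightarrow> C \<le> C'"
    and F: "\<And>v g. 0 \<le> F v g" and G: "\<And>v g. 0 \<le> G v g"
  shows "0 \<le> C"
proof (rule ccontr)
  assume "\<not> 0 \<le> C"
  \<comment> \<open>A negative bound forces \<open>F = G = 0\<close> on \<open>P\<close>, so \<open>C - 1\<close> would be a smaller bound.\<close>
  have "F v g \<le> (C - 1) * G v g" if "P v g" for v g
  proof -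
    have "F v g \<le> C * G v g" using bound that by blast
    moreover have "C * G v g \<le> 0" using \<open>\<not> 0 \<le> C\<close> G[of v g] by (simp add: mult_nonpos_nonneg)
    ultimately have "F v g = 0" "C * G v g = 0" using F[of v g] by linarith+
    then show ?thesis using \<open>\<not> 0 \<le> C\<close> by simp
  qed
  then have "C \<le> C - 1" using least by blast
  then show False by simp
qed

lemma le_add_if_power2_le:
  fixes N P R L C :: real
  assumes "N\<^sup>2 \<le> P * N + R * L" and "L \<le> C * N"
    and "0 \<le> N" "0 \<le> P" "0 \<le> R" "0 \<le> C"
  shows "N \<le> P + C * R"
proof -
  have "R * L \<le> R * (C * N)" using assms by (simp add: mult_left_mono)
  then have "N * N \<le> N * (P + C * R)" using assms(1) by (simp add: power2_eq_square algebra_simps)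
  then show ?thesis using assms(3-6) by (cases "N = 0") (auto simp: mult_le_cancel_left)
qed

theorem theorem5p2:
  fixes \<Omega> :: "'a::euclidean_space set" and A :: "'a \<Rightarrow> 'a \<Rightarrow> 'a"
    and CP lam :: real and u w :: "'a \<Rightarrow> real" and gu gw :: "'a \<Rightarrow> 'a"
  assumes dom: "lipschitz_domain \<Omega>"
    and coeff: "coeff_ok \<Omega> A"
    and CP_bound: "\<forall>v gv. inV \<Omega> v gv \<longrightarrow> L2norm \<Omega> v \<le> CP * Anorm \<Omega> A gv"
    and CP_min: "\<forall>C. (\<forall>v gv. inV \<Omega> v gv \<longrightarrow> L2norm \<Omega> v \<le> C * Anorm \<Omega> A gv) \<longrightarrow> CP \<le> C"
    and u: "inV \<Omega> u gu"
    and w: "inV \<Omega> w gw"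
    and eq: "\<forall>v gv. inV \<Omega> v gv \<longrightarrow>
               aform \<Omega> A gw gv = aform \<Omega> A gu gv - lam * L2inner \<Omega> u v"
  shows "\<forall>q r. W0 \<Omega> q r \<longrightarrow>
           Anorm \<Omega> A gw \<le> Anorm \<Omega> A (\<lambda>x. gu x - inv (A x) (q x))
                           + CP * L2norm \<Omega> (\<lambda>x. lam * u x + r x)"
proof (intro allI impI)
  fix q r assume W: "W0 \<Omega> q r"
  define p where "p = (\<lambda>x. gu x - inv (A x) (q x))"
  define h where "h = (\<lambda>x. lam * u x + r x)"
  note u2 = square_integrable_if_inV[OF u] and w2 = square_integrable_if_inV[OF w]
    and q2 = square_integrable_if_W0[OF W]
  have p2: "square_integrable \<Omega> p"
    unfolding p_def by (intro square_integrable_diff square_integrable_coeff_inv_apply coeff u2 q2)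
  have h2: "square_integrable \<Omega> h"
    using square_integrable_add[OF square_integrable_scaleR[OF u2(1), where k=lam] q2(2)]
    by (simp add: h_def)
  have "H1 \<Omega> w gw" using w by (simp add: inV_def)
  moreover have "aform \<Omega> A gw gw = aform \<Omega> A gu gw - lam * L2inner \<Omega> u w" using eq w by blast
  ultimately have "(Anorm \<Omega> A gw)\<^sup>2 = aform \<Omega> A p gw - L2inner \<Omega> h w"
    unfolding Anorm_power2[OF coeff] p_def h_def by (rule residual_energy_identity[OF coeff u2 _ W])
  also have "\<dots> \<le> Anorm \<Omega> A p * Anorm \<Omega> A gw + L2norm \<Omega> h * L2norm \<Omega> w"
    using aform_le_Anorm_mult[OF coeff p2 w2(2)] L2inner_abs_le_L2norm_mult[OF h2 w2(1)] by linarith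
  finally have energy: "(Anorm \<Omega> A gw)\<^sup>2 \<le> Anorm \<Omega> A p * Anorm \<Omega> A gw + L2norm \<Omega> h * L2norm \<Omega> w" .
  have poincare: "L2norm \<Omega> w \<le> CP * Anorm \<Omega> A gw"
    using CP_bound w by blast
  have CP_nonneg: "0 \<le> CP"
    by (rule least_bound_constant_nonneg[OF CP_bound CP_min L2norm_nonneg Anorm_nonneg[OF coeff]])
  have "Anorm \<Omega> A gw \<le> Anorm \<Omega> A p + CP * L2norm \<Omega> h"
    by (rule le_add_if_power2_le[OF energy poincare Anorm_nonneg[OF coeff] Anorm_nonneg[OF coeff]
          L2norm_nonneg CP_nonneg])
  then show "Anorm \<Omega> A gw \<le> Anorm \<Omega> A (\<lambda>x. gu x - inv (A x) (q x)) + CP * L2norm \<Omega> (\<lambda>x. lam * u x + r x)"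
    by (simp add: p_def h_def)
qed

end
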